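(* Let $\{(x_i,y_i)\}_{i=1}^n$ be a dataset, $\alpha\in(0,1)$, and $g\in(0,1)$. Suppose an (unfair) learner is given which, on input any $w\in\Delta_n$, outputs a deterministic classifier $f$ with $\sum_{i=1}^n w_i\mathbf 1_{\{f(x_i)\neq y_i\}}\le g$. Consider the procedure "AdaBoost + Average" with $T$ rounds and step size $\eta>0$: set $w^1=(\frac1n,\dots,\frac1n)$; for $t=1,\dots,T$, feed $w^t$ to the learner, receive $f^t$ with losses $\ell_i^t=\mathbf 1_{\{f^t(x_i)\neq y_i\}}$, and set $w^{t+1}\in\Delta_n$ with $w_i^{t+1}\propto\exp\big(\eta\sum_{s=1}^t\ell_i^s\big)$; finally output the ensemble with model weights $\lambda=(\frac1T,\dots,\frac1T)$. Then there is an absolute constant $C$ such that for every $\delta>0$ and every $T\ge C\frac{\log n}{\delta^2}$, running this procedure with $\eta=\sqrt{8\log n/T}$ yields an ensemble whose training $\alpha$-CVaR zero-one loss $$\max_{w\in\Delta_n,\ w_i\le\frac1{\alpha n}\ \forall i}\ \sum_{i=1}^n w_i\,\frac1T\sum_{t=1}^T\ell_i^t$$ is at most $g+\delta$.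
   Context: $\Delta_n=\{w\in\mathbb R^n:w_i\ge0,\sum_iw_i=1\}$. The ensemble samples a base model uniformly from $f^1,\dots,f^T$ and predicts with it; its $\alpha$-CVaR zero-one loss is the displayed quantity, i.e. the maximum over weightings $w$ with $w_i\le 1/(\alpha n)$ of the weighted average of the per-sample expected zero-one losses. *)

theory Defs
  imports Complex_Main
begin

definition simplex :: "nat \<Rightarrow> (nat \<Rightarrow> real) set" where
  "simplex n = {w. (\<forall>i<n. 0 \<le> w i) \<and> (\<Sum>i<n. w i) = 1}"

definition zo_loss :: "('x \<Rightarrow> 'y) \<Rightarrow> (nat \<Rightarrow> 'x) \<Rightarrow> (nat \<Rightarrow> 'y) \<Rightarrow> nat \<Rightarrow> real" where
  "zo_loss f xs ys i = (if f (xs i) \<noteq> ys i then 1 else 0)"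

definition exp_weights :: "nat \<Rightarrow> real \<Rightarrow> (nat \<Rightarrow> real) \<Rightarrow> nat \<Rightarrow> real" where
  "exp_weights n \<eta> c = (\<lambda>i. exp (\<eta> * c i) / (\<Sum>j<n. exp (\<eta> * c j)))"

text \<open>AdaBoost cumulative losses: cum_loss ... t i = sum_{s=1}^t l_i^s,
  where round s (1-based) uses weights w^s = exp_weights of cum_loss (s-1).
  Hence w^1 is uniform.\<close>
fun cum_loss :: "((nat \<Rightarrow> real) \<Rightarrow> 'x \<Rightarrow> 'y) \<Rightarrow> (nat \<Rightarrow> 'x) \<Rightarrow> (nat \<Rightarrow> 'y) \<Rightarrow> nat \<Rightarrow> real
    \<Rightarrow> nat \<Rightarrow> nat \<Rightarrow> real" where
  "cum_loss L xs ys n \<eta> 0 = (\<lambda>i. 0)"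
| "cum_loss L xs ys n \<eta> (Suc t) =
     (\<lambda>i. cum_loss L xs ys n \<eta> t i
          + zo_loss (L (exp_weights n \<eta> (cum_loss L xs ys n \<eta> t))) xs ys i)"

text \<open>The weight vector w^{t+1} fed to the learner in round t+1 (t counted from 0).\<close>
definition ada_weights :: "((nat \<Rightarrow> real) \<Rightarrow> 'x \<Rightarrow> 'y) \<Rightarrow> (nat \<Rightarrow> 'x) \<Rightarrow> (nat \<Rightarrow> 'y) \<Rightarrow> nat \<Rightarrow> real
    \<Rightarrow> nat \<Rightarrow> nat \<Rightarrow> real" where
  "ada_weights L xs ys n \<eta> t = exp_weights n \<eta> (cum_loss L xs ys n \<eta> t)"

text \<open>The base model f^{t+1} returned by the learner in round t+1 (t counted from 0).\<close>
definition ada_model :: "((nat \<Rightarrow> real) \<Rightarrow> 'x \<Rightarrow> 'y) \<Rightarrow> (nat \<Rightarrow> 'x) \<Rightarrow> (nat \<Rightarrow> 'y) \<Rightarrow> nat \<Rightarrow> real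
    \<Rightarrow> nat \<Rightarrow> 'x \<Rightarrow> 'y" where
  "ada_model L xs ys n \<eta> t = L (ada_weights L xs ys n \<eta> t)"

definition cvar :: "real \<Rightarrow> nat \<Rightarrow> (nat \<Rightarrow> real) \<Rightarrow> real" where
  "cvar \<alpha> n l = (SUP w \<in> {w \<in> simplex n. \<forall>i<n. w i \<le> 1 / (\<alpha> * real n)}. \<Sum>i<n. w i * l i)"

definition ensemble_loss :: "((nat \<Rightarrow> real) \<Rightarrow> 'x \<Rightarrow> 'y) \<Rightarrow> (nat \<Rightarrow> 'x) \<Rightarrow> (nat \<Rightarrow> 'y) \<Rightarrow> nat \<Rightarrow> real
    \<Rightarrow> nat \<Rightarrow> nat \<Rightarrow> real" where
  "ensemble_loss L xs ys n \<eta> T i =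
     (1 / real T) * (\<Sum>t<T. zo_loss (ada_model L xs ys n \<eta> t) xs ys i)"

end

theory Submission imports Defs begin

(* AdaBoost's reweighting is the Hedge algorithm run by an adversary of the learner, with the
  zero-one losses as gains.  The potential \<Phi>_t = \<Sum>_j exp (\<eta> c_t j) of the cumulative
  losses c_t grows by a factor of at most exp ((\<eta> + \<eta>\<^sup>2) g) per round, because the learner's
  weighted error under the current Hedge weights is at most g.  Comparing \<Phi>_T with the single
  term of sample i gives c_T i / T \<le> g + (ln n)/(\<eta> T) + \<eta> g, which for \<eta> = sqrt (8 ln n / T)
  is at most g + (9 / sqrt 8) sqrt (ln n / T) \<le> g + \<delta> once T \<ge> 11 ln n / \<delta>\<^sup>2, as 81/8 < 11.
  So every sample has ensemble loss at most g + \<delta>, and hence so does every average of them,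
  in particular the \<alpha>-CVaR. *)

definition weak_learner ::
    "real \<Rightarrow> nat \<Rightarrow> (nat \<Rightarrow> 'x) \<Rightarrow> (nat \<Rightarrow> 'y) \<Rightarrow> ((nat \<Rightarrow> real) \<Rightarrow> 'x \<Rightarrow> 'y) \<Rightarrow> bool" where
  "weak_learner g n xs ys L \<longleftrightarrow> (\<forall>w \<in> simplex n. (\<Sum>i<n. w i * zo_loss (L w) xs ys i) \<le> g)"

lemma zo_loss_cases: "zo_loss f xs ys i = 0 \<or> zo_loss f xs ys i = 1"
  by (simp add: zo_loss_def)

lemma zo_loss_le_1: "zo_loss f xs ys i \<le> 1"
  by (simp add: zo_loss_def)

lemma cum_loss_eq_sum:
  "cum_loss L xs ys n \<eta> t i = (\<Sum>s<t. zo_loss (ada_model L xs ys n \<eta> s) xs ys i)"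
  by (induction t) (simp_all add: ada_model_def ada_weights_def)

lemma cum_loss_le_rounds: "cum_loss L xs ys n \<eta> t i \<le> real t"
proof -
  have "(\<Sum>s<t. zo_loss (ada_model L xs ys n \<eta> s) xs ys i) \<le> (\<Sum>s<t. 1)"
    by (intro sum_mono zo_loss_le_1)
  then show ?thesis
    by (simp add: cum_loss_eq_sum)
qed

lemma ensemble_loss_eq_cum_loss:
  "ensemble_loss L xs ys n \<eta> T i = cum_loss L xs ys n \<eta> T i / real T"
  by (simp add: ensemble_loss_def cum_loss_eq_sum)

lemma exp_weights_in_simplex:
  assumes "n \<ge> 1"
  shows "exp_weights n \<eta> c \<in> simplex n"
proof -
  have "(\<Sum>j<n. exp (\<eta> * c j)) > 0"
    using assms by (intro sum_pos) (auto simp: lessThan_empty_iff)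
  then show ?thesis
    by (auto simp: simplex_def exp_weights_def sum_divide_distrib[symmetric])
qed

lemma cum_loss_single_sample_le:
  assumes "weak_learner g 1 xs ys L"
  shows "cum_loss L xs ys 1 \<eta> t 0 \<le> real t * g"
proof (induction t)
  case 0
  then show ?case by simp
next
  case (Suc t)
  define w where "w = exp_weights 1 \<eta> (cum_loss L xs ys 1 \<eta> t)"
  have "w \<in> simplex 1"
    unfolding w_def by (rule exp_weights_in_simplex) simp
  moreover have "w 0 = 1"
    by (simp add: w_def exp_weights_def)
  ultimately have "zo_loss (L w) xs ys 0 \<le> g"
    using assms by (auto simp: weak_learner_def)
  with Suc show ?case
    by (simp add: w_def algebra_simps)
qed

definition potential ::
    "((nat \<Rightarrow> real) \<Rightarrow> 'x \<Rightarrow> 'y) \<Rightarrow> (nat \<Rightarrow> 'x) \<Rightarrow> (nat \<Rightarrow> 'y) \<Rightarrow> nat \<Rightarrow> real \<Rightarrow> nat \<Rightarrow> real" where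
  "potential L xs ys n \<eta> t = (\<Sum>j<n. exp (\<eta> * cum_loss L xs ys n \<eta> t j))"

lemma potential_Suc_le:
  assumes n: "n \<ge> 1" and \<eta>: "0 \<le> \<eta>" "\<eta> \<le> 1" and "0 \<le> g"
    and learner: "weak_learner g n xs ys L"
  shows "potential L xs ys n \<eta> (Suc t) \<le> potential L xs ys n \<eta> t * exp ((\<eta> + \<eta>\<^sup>2) * g)"
proof -
  define E where "E j = exp (\<eta> * cum_loss L xs ys n \<eta> t j)" for j
  define S where "S = (\<Sum>j<n. E j)"
  define w where "w = ada_weights L xs ys n \<eta> t"
  define l where "l j = zo_loss (L w) xs ys j" for j
  have "S > 0"
    unfolding S_def E_def using n by (intro sum_pos) (auto simp: lessThan_empty_iff)
  have "w \<in> simplex n"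
    unfolding w_def ada_weights_def using n by (rule exp_weights_in_simplex)
  then have error: "(\<Sum>j<n. w j * l j) \<le> g"
    using learner by (simp add: weak_learner_def l_def)
  have weighted_sum: "(\<Sum>j<n. E j * l j) = S * (\<Sum>j<n. w j * l j)"
    using \<open>S > 0\<close>
    by (simp add: sum_distrib_left w_def ada_weights_def exp_weights_def E_def S_def)
  have exp_le: "exp (\<eta> * l j) \<le> 1 + (\<eta> + \<eta>\<^sup>2) * l j" for j
    using zo_loss_cases[of "L w" xs ys j] exp_bound[OF \<eta>] by (auto simp: l_def)
  have "potential L xs ys n \<eta> (Suc t) = (\<Sum>j<n. E j * exp (\<eta> * l j))"
    by (simp add: potential_def E_def l_def w_def ada_weights_def distrib_left exp_add)
  also have "\<dots> \<le> (\<Sum>j<n. E j * (1 + (\<eta> + \<eta>\<^sup>2) * l j))"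
    by (intro sum_mono mult_left_mono exp_le) (simp add: E_def)
  also have "\<dots> = S + (\<eta> + \<eta>\<^sup>2) * (\<Sum>j<n. E j * l j)"
    by (simp add: S_def algebra_simps sum.distrib sum_distrib_left)
  also have "\<dots> \<le> S + (\<eta> + \<eta>\<^sup>2) * (S * g)"
    unfolding weighted_sum using error \<open>S > 0\<close> \<eta> by (intro add_left_mono mult_left_mono) auto
  also have "\<dots> = S * (1 + (\<eta> + \<eta>\<^sup>2) * g)"
    by (simp add: algebra_simps)
  also have "\<dots> \<le> S * exp ((\<eta> + \<eta>\<^sup>2) * g)"
    using \<open>S > 0\<close> by (intro mult_left_mono) auto
  finally show ?thesis
    by (simp add: S_def E_def potential_def)
qed

lemma potential_le:
  assumes "n \<ge> 1" "0 \<le> \<eta>" "\<eta> \<le> 1" "0 \<le> g" "weak_learner g n xs ys L"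
  shows "potential L xs ys n \<eta> t \<le> real n * exp (real t * (\<eta> + \<eta>\<^sup>2) * g)"
proof (induction t)
  case 0
  then show ?case by (simp add: potential_def)
next
  case (Suc t)
  have "potential L xs ys n \<eta> (Suc t) \<le> potential L xs ys n \<eta> t * exp ((\<eta> + \<eta>\<^sup>2) * g)"
    using assms by (rule potential_Suc_le)
  also have "\<dots> \<le> real n * exp (real t * (\<eta> + \<eta>\<^sup>2) * g) * exp ((\<eta> + \<eta>\<^sup>2) * g)"
    using Suc by (intro mult_right_mono) auto
  also have "\<dots> = real n * exp (real (Suc t) * (\<eta> + \<eta>\<^sup>2) * g)"
    by (simp add: exp_add[symmetric] algebra_simps)
  finally show ?case .
qed

lemma hedge_cum_loss_le:
  assumes "n \<ge> 1" "0 \<le> \<eta>" "\<eta> \<le> 1" "0 \<le> g" "weak_learner g n xs ys L" and "i < n"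
  shows "\<eta> * cum_loss L xs ys n \<eta> T i \<le> ln (real n) + real T * (\<eta> + \<eta>\<^sup>2) * g"
proof -
  have "exp (\<eta> * cum_loss L xs ys n \<eta> T i) \<le> potential L xs ys n \<eta> T"
    unfolding potential_def using \<open>i < n\<close> by (intro member_le_sum) auto
  also have "\<dots> \<le> real n * exp (real T * (\<eta> + \<eta>\<^sup>2) * g)"
    using assms(1-5) by (rule potential_le)
  also have "\<dots> = exp (ln (real n) + real T * (\<eta> + \<eta>\<^sup>2) * g)"
    using \<open>n \<ge> 1\<close> by (simp add: exp_add)
  finally show ?thesis
    by simp
qed

lemma step_size_le_1:
  assumes "0 \<le> a" "0 < T" "0 < \<delta>" "\<delta> \<le> 1" "11 * a \<le> T * \<delta>\<^sup>2"
  shows "sqrt (8 * a / T) \<le> 1"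
proof -
  have "T * \<delta>\<^sup>2 \<le> T"
    using assms(2-4) by (simp add: power_le_one)
  then have "8 * a \<le> T"
    using assms(1,5) by linarith
  then show ?thesis
    using assms(2) by simp
qed

lemma step_size_regret_le:
  fixes a T \<delta> g :: real
  defines "\<eta> \<equiv> sqrt (8 * a / T)"
  assumes "0 \<le> a" "0 < T" "0 < \<delta>" "11 * a \<le> T * \<delta>\<^sup>2" "0 \<le> g" "g \<le> 1"
  shows "a + T * (\<eta> + \<eta>\<^sup>2) * g \<le> \<eta> * T * (g + \<delta>)"
proof -
  have T_\<eta>2: "T * \<eta>\<^sup>2 = 8 * a"
    using assms(2,3) by (simp add: \<eta>_def)
  have "(9 * a)\<^sup>2 \<le> 8 * a * (11 * a)"
    by (simp add: power2_eq_square)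
  also have "\<dots> \<le> 8 * a * (T * \<delta>\<^sup>2)"
    using assms(2,5) by (intro mult_left_mono) auto
  also have "\<dots> = (\<eta> * T * \<delta>)\<^sup>2"
    by (simp add: T_\<eta>2[symmetric] power_mult_distrib power2_eq_square)
  finally have "9 * a \<le> \<eta> * T * \<delta>"
    by (rule power2_le_imp_le) (use assms(2-4) in \<open>simp add: \<eta>_def\<close>)
  moreover have "T * \<eta>\<^sup>2 * g \<le> 8 * a"
    using T_\<eta>2 assms(2,6,7) by (simp add: mult_left_le)
  ultimately show ?thesis
    using assms(2) by (simp add: algebra_simps)
qed

lemma cum_loss_le:
  assumes n: "n \<ge> 1" and g: "0 \<le> g" "g \<le> 1" and learner: "weak_learner g n xs ys L"
    and \<delta>: "0 < \<delta>" and T: "T \<ge> 1" "11 * ln (real n) \<le> real T * \<delta>\<^sup>2" and i: "i < n"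
  shows "cum_loss L xs ys n (sqrt (8 * ln (real n) / real T)) T i \<le> real T * (g + \<delta>)"
proof -
  define \<eta> where "\<eta> = sqrt (8 * ln (real n) / real T)"
  consider "1 \<le> \<delta>" | "n = 1" | "\<delta> < 1" "n > 1"
    using n by linarith
  then have "cum_loss L xs ys n \<eta> T i \<le> real T * (g + \<delta>)"
  proof cases
    case 1
    have "real T * 1 \<le> real T * (g + \<delta>)"
      using 1 g by (intro mult_left_mono) auto
    then show ?thesis
      using cum_loss_le_rounds[of L xs ys n \<eta> T i] by simp
  next
    case 2
    \<comment> \<open>Here \<eta> = 0 and the potential bound is void, but the only sample always has weight 1.\<close>
    then have "cum_loss L xs ys n \<eta> T i \<le> real T * g"
      using cum_loss_single_sample_le learner i by simp
    then show ?thesis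
      using \<delta> by (simp add: distrib_left add_increasing2)
  next
    case 3
    have "0 \<le> \<eta>" "\<eta> > 0" "\<eta> \<le> 1"
      using 3 T \<delta> step_size_le_1[of "ln (real n)" "real T" \<delta>] by (auto simp: \<eta>_def)
    then have "\<eta> * cum_loss L xs ys n \<eta> T i \<le> ln (real n) + real T * (\<eta> + \<eta>\<^sup>2) * g"
      using hedge_cum_loss_le n g learner i by blast
    also have "\<dots> \<le> \<eta> * (real T * (g + \<delta>))"
      using step_size_regret_le[of "ln (real n)" "real T" \<delta> g] n T \<delta> g
      by (simp add: \<eta>_def algebra_simps)
    finally show ?thesis
      using \<open>\<eta> > 0\<close> by simp
  qed
  then show ?thesis
    by (simp add: \<eta>_def)
qed

lemma cvar_le_of_le:
  assumes "n \<ge> 1" "0 < \<alpha>" "\<alpha> \<le> 1" and bound: "\<And>i. i < n \<Longrightarrow> l i \<le> b"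
  shows "cvar \<alpha> n l \<le> b"
proof -
  define W where "W = {w \<in> simplex n. \<forall>i<n. w i \<le> 1 / (\<alpha> * real n)}"
  have "1 / real n \<le> 1 / (\<alpha> * real n)"
    using assms(1-3) by (intro divide_left_mono) (auto simp: mult_le_cancel_right1)
  then have "(\<lambda>i. 1 / real n) \<in> W"
    using assms(1) by (auto simp: W_def simplex_def)
  then have "W \<noteq> {}"
    by blast
  then have "(SUP w \<in> W. \<Sum>i<n. w i * l i) \<le> b"
  proof (rule cSUP_least)
    fix w assume "w \<in> W"
    then have "\<forall>i<n. 0 \<le> w i" "(\<Sum>i<n. w i) = 1"
      by (auto simp: W_def simplex_def)
    then have "(\<Sum>i<n. w i * l i) \<le> (\<Sum>i<n. w i * b)"
      using bound by (intro sum_mono mult_left_mono) auto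
    also have "\<dots> = b"
      using \<open>(\<Sum>i<n. w i) = 1\<close> by (simp add: sum_distrib_right[symmetric])
    finally show "(\<Sum>i<n. w i * l i) \<le> b" .
  qed
  then show ?thesis
    by (simp add: cvar_def W_def)
qed

theorem theorem2:
  shows "\<exists>C::real. \<forall>(n::nat) (xs::nat \<Rightarrow> 'x) (ys::nat \<Rightarrow> 'y) (\<alpha>::real) (g::real)
           (L::(nat \<Rightarrow> real) \<Rightarrow> 'x \<Rightarrow> 'y) (\<delta>::real) (T::nat).
     n \<ge> 1 \<longrightarrow> 0 < \<alpha> \<longrightarrow> \<alpha> < 1 \<longrightarrow> 0 < g \<longrightarrow> g < 1 \<longrightarrow>
     (\<forall>w \<in> simplex n. (\<Sum>i<n. w i * zo_loss (L w) xs ys i) \<le> g) \<longrightarrow>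
     0 < \<delta> \<longrightarrow> T \<ge> 1 \<longrightarrow> real T \<ge> C * ln (real n) / \<delta>\<^sup>2 \<longrightarrow>
     cvar \<alpha> n (ensemble_loss L xs ys n (sqrt (8 * ln (real n) / real T)) T) \<le> g + \<delta>"
proof (intro exI[of _ 11] allI impI)
  fix n :: nat and xs :: "nat \<Rightarrow> 'x" and ys :: "nat \<Rightarrow> 'y" and \<alpha> g :: real
    and L :: "(nat \<Rightarrow> real) \<Rightarrow> 'x \<Rightarrow> 'y" and \<delta> :: real and T :: nat
  assume n: "n \<ge> 1" and \<alpha>: "0 < \<alpha>" "\<alpha> < 1" and g: "0 < g" "g < 1"
    and learner: "\<forall>w \<in> simplex n. (\<Sum>i<n. w i * zo_loss (L w) xs ys i) \<le> g"
    and \<delta>: "0 < \<delta>" and T: "T \<ge> 1" "real T \<ge> 11 * ln (real n) / \<delta>\<^sup>2"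
  have T': "11 * ln (real n) \<le> real T * \<delta>\<^sup>2"
    using T(2) \<delta> by (simp add: field_simps)
  have "ensemble_loss L xs ys n (sqrt (8 * ln (real n) / real T)) T i \<le> g + \<delta>" if "i < n" for i
    using cum_loss_le[OF n _ _ _ \<delta> T(1) T' that, of g xs ys L] g learner T(1)
    by (simp add: ensemble_loss_eq_cum_loss weak_learner_def divide_le_eq mult.commute)
  then show "cvar \<alpha> n (ensemble_loss L xs ys n (sqrt (8 * ln (real n) / real T)) T) \<le> g + \<delta>"
    using n \<alpha> by (intro cvar_le_of_le) auto
qed

end
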